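(* Let $D=\{G=0\}$ with $G=F_2^2-c'Z^4$. Then: \begin{enumerate} \item If $C_2$ is smooth at a point $P\in C_2\cap L_\infty$, then $(D,P)$ is of type $a_{4\iota-1}$, where $\iota=I(C_2,L_\infty;P)$. \item If $C_2$ is singular at a point $P\in C_2\cap L_\infty$, then $D$ consists of four lines. \item If $P$ is an outer singularity of $D$, i.e. $P\in\operatorname{Sing}(D)\setminus C_2$, then $(D,P)$ is of type $a_1$. \end{enumerate}
   Context: Work in $\mathbb{P}^2$ with homogeneous coordinates $[X:Y:Z]$, $L_\infty=\{Z=0\}$. Let $F_2=F_2^{(2)}(X,Y)+F_2^{(1)}(X,Y)Z+a_{00}Z^2$ be a homogeneous quadratic form, where $F_2^{(i)}$ is a form of degree $i$ in $X,Y$, let $C_2=\{F_2=0\}$, assumed not to contain $L_\infty$, and let $c'\ne0$ be a constant. (This $D$ arises from an invisible factorization $F_2^4-F_4^2=Z^4G$ of a $(2,4)$ torus curve, with $F_4=F_2^2-cZ^4$.) $I(\cdot,\cdot;P)$ is the local intersection multiplicity; for $n\ge1$, type $a_n$ means topologically equivalent to the germ $x^2+y^{n+1}=0$. *)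

theory Defs
  imports "HOL-Analysis.Analysis" "HOL-Computational_Algebra.Polynomial"
begin

text \<open>Homogeneous coordinates of P^2 over the complex numbers: nonzero triples (X,Y,Z).
  L_infinity = {Z = 0}.\<close>

type_synonym pt = "complex \<times> complex \<times> complex"

definition F2 :: "complex \<Rightarrow> complex \<Rightarrow> complex \<Rightarrow> complex \<Rightarrow> complex \<Rightarrow> complex \<Rightarrow> pt \<Rightarrow> complex" where
  "F2 a20 a11 a02 a10 a01 a00 = (\<lambda>(x, y, z).
      a20 * x^2 + a11 * x * y + a02 * y^2 + (a10 * x + a01 * y) * z + a00 * z^2)"

definition on_curve :: "(pt \<Rightarrow> complex) \<Rightarrow> pt \<Rightarrow> bool" where
  "on_curve f p \<longleftrightarrow> p \<noteq> 0 \<and> f p = 0"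

definition sing_pt :: "(pt \<Rightarrow> complex) \<Rightarrow> pt \<Rightarrow> bool" where
  "sing_pt f p \<longleftrightarrow> on_curve f p \<and> (f has_derivative (\<lambda>_. 0)) (at p)"

definition smooth_pt :: "(pt \<Rightarrow> complex) \<Rightarrow> pt \<Rightarrow> bool" where
  "smooth_pt f p \<longleftrightarrow> on_curve f p \<and> \<not> sing_pt f p"

definition on_Linf :: "pt \<Rightarrow> bool" where
  "on_Linf p \<longleftrightarrow> p \<noteq> 0 \<and> snd (snd p) = 0"

definition chart :: "pt \<Rightarrow> complex \<times> complex \<Rightarrow> pt" where
  "chart p = (case p of (x, y, z) \<Rightarrow>
     if z \<noteq> 0 then (\<lambda>(u, v). (u, v, 1))
     else if y \<noteq> 0 then (\<lambda>(u, v). (u, 1, v))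
     else (\<lambda>(u, v). (1, u, v)))"

definition chart_pt :: "pt \<Rightarrow> complex \<times> complex" where
  "chart_pt p = (case p of (x, y, z) \<Rightarrow>
     if z \<noteq> 0 then (x / z, y / z)
     else if y \<noteq> 0 then (x / y, z / y)
     else (y / x, z / x))"

definition germ_type_a :: "(pt \<Rightarrow> complex) \<Rightarrow> pt \<Rightarrow> nat \<Rightarrow> bool" where
  "germ_type_a f p n \<longleftrightarrow>
     (\<exists>U V (h :: complex \<times> complex \<Rightarrow> complex \<times> complex) k. open U \<and> open V \<and> chart_pt p \<in> U \<and> homeomorphism U V h k \<and>
        h (chart_pt p) = 0 \<and>
        h ` {w \<in> U. f (chart p w) = 0} = {(x, y). (x, y) \<in> V \<and> x^2 + y^(n+1) = 0})"

text \<open>Local intersection multiplicity I(C_2, L_infinity; P) for P = [p1:p2:0]: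
  the order of vanishing at t = 0 of the restriction t \<mapsto> F_2(P + t Q) of F_2 to the line
  L_infinity, where Q = [q1:q2:0] is a second point of L_infinity
  (Q = [0:1:0] if p1 /= 0, else [1:0:0]).  Only the Z-free part F_2^(2) matters on Z = 0.\<close>
definition I_Linf :: "complex \<Rightarrow> complex \<Rightarrow> complex \<Rightarrow> pt \<Rightarrow> nat" where
  "I_Linf a20 a11 a02 p = (case p of (p1, p2, _) \<Rightarrow>
     (let (q1, q2) = (if p1 \<noteq> 0 then (0, 1) else (1, 0)) in
       order 0 [: a20 * p1^2 + a11 * p1 * p2 + a02 * p2^2,
                  2 * a20 * p1 * q1 + a11 * (p1 * q2 + p2 * q1) + 2 * a02 * p2 * q2,
                  a20 * q1^2 + a11 * q1 * q2 + a02 * q2^2 :]))"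

definition lin_form :: "pt \<Rightarrow> pt \<Rightarrow> complex" where
  "lin_form l = (\<lambda>(x, y, z). fst l * x + fst (snd l) * y + snd (snd l) * z)"

definition four_lines :: "(pt \<Rightarrow> complex) \<Rightarrow> bool" where
  "four_lines f \<longleftrightarrow> (\<exists>l :: nat \<Rightarrow> pt. (\<forall>i<4. l i \<noteq> 0) \<and>
      (\<forall>w. f w = (\<Prod>i<4. lin_form (l i) w)))"

definition scal :: "complex \<Rightarrow> pt \<Rightarrow> pt" where
  "scal c = (\<lambda>(x, y, z). (c * x, c * y, c * z))"

definition proj_class :: "pt \<Rightarrow> pt set" where
  "proj_class p = {scal c p | c. c \<noteq> 0}"

text \<open>The curve {f = 0} has only finitely many singular points of P^2 (i.e. it is reduced).\<close>
definition finite_sing :: "(pt \<Rightarrow> complex) \<Rightarrow> bool" where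
  "finite_sing f \<longleftrightarrow> finite (proj_class ` {p. sing_pt f p})"

end

theory Submission
  imports Defs
begin

text \<open>Write \<open>G = (F\<^sub>2 - s Z\<^sup>2) (F\<^sub>2 + s Z\<^sup>2)\<close> with \<open>s\<^sup>2 = c'\<close>.
  Near a smooth point \<open>P \<in> C\<^sub>2 \<inter> L\<^sub>\<infinity>\<close> each factor is a smooth conic through \<open>P\<close>, i.e. a
  continuous graph in suitable affine coordinates (solved by the quadratic formula), and the two
  graphs differ by a unit times the \<open>2\<iota>\<close>-th power of the parameter; a homeomorphism straightening
  both graphs carries \<open>D\<close> onto the model \<open>x\<^sup>2 + y\<^sup>4\<^sup>\<iota> = 0\<close>.
  If \<open>C\<^sub>2\<close> is singular at \<open>P \<in> L\<^sub>\<infinity>\<close>, both factors are conics singular at \<open>P\<close>, hence line pairs.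
  At an outer singularity \<open>F\<^sub>2 = \<plusminus>s Z\<^sup>2\<close> and the affine gradient of \<open>F\<^sub>2\<close> vanishes, so
  \<open>D\<close> is locally \<open>{Q = 0}\<close> for the quadratic part \<open>Q\<close> of \<open>F\<^sub>2\<close>: a node if \<open>Q\<close> is
  nondegenerate, while a degenerate \<open>Q\<close> would make \<open>D\<close> singular along a whole line.\<close>

definition germ_type_a_at :: "(complex \<times> complex \<Rightarrow> complex) \<Rightarrow> complex \<times> complex \<Rightarrow> nat \<Rightarrow> bool" where
  "germ_type_a_at g w0 n \<longleftrightarrow> (\<exists>U V (h :: complex \<times> complex \<Rightarrow> complex \<times> complex) k.
     open U \<and> open V \<and> w0 \<in> U \<and> homeomorphism U V h k \<and> h w0 = 0 \<and>
     h ` {w \<in> U. g w = 0} = {(x, y). (x, y) \<in> V \<and> x^2 + y^(n+1) = 0})"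

lemma germ_type_a_atI:
  fixes h k :: "complex \<times> complex \<Rightarrow> complex \<times> complex"
  assumes "open U" "open V" "w0 \<in> U" "homeomorphism U V h k" "h w0 = 0"
    and "h ` {w \<in> U. g w = 0} = {(x, y). (x, y) \<in> V \<and> x^2 + y^(n+1) = 0}"
  shows "germ_type_a_at g w0 n"
  unfolding germ_type_a_at_def
  by (rule exI[of _ U], rule exI[of _ V], rule exI[of _ h], rule exI[of _ k]) (simp add: assms)

lemma germ_type_a_iff_chart: "germ_type_a f p n \<longleftrightarrow> germ_type_a_at (\<lambda>w. f (chart p w)) (chart_pt p) n"
  by (simp add: germ_type_a_def germ_type_a_at_def)

lemma germ_type_a_at_model: "germ_type_a_at (\<lambda>(x, y). x^2 + y^(n+1)) 0 n"
  unfolding germ_type_a_at_def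
  by (rule exI[of _ UNIV], rule exI[of _ UNIV], rule exI[of _ id], rule exI[of _ id])
     (auto intro: homeomorphismI)

lemma germ_type_a_at_pullback:
  fixes \<phi> :: "complex \<times> complex \<Rightarrow> complex \<times> complex"
  assumes hom: "homeomorphism S T \<phi> \<psi>" and ST: "open S" "open T"
    and germ: "germ_type_a_at g' (\<phi> w0) n"
    and W: "open W" "w0 \<in> W" "W \<subseteq> S" and zeros: "\<forall>w\<in>W. g w = 0 \<longleftrightarrow> g' (\<phi> w) = 0"
  shows "germ_type_a_at g w0 n"
proof -
  obtain U V and h k :: "complex \<times> complex \<Rightarrow> complex \<times> complex" where
    U: "open U" "open V" "\<phi> w0 \<in> U" and hk: "homeomorphism U V h k" and h0: "h (\<phi> w0) = 0"
    and model: "h ` {z \<in> U. g' z = 0} = {(x, y). (x, y) \<in> V \<and> x^2 + y^(n+1) = 0}"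
    using germ unfolding germ_type_a_at_def by blast
  define U' where "U' = \<phi> -` U \<inter> S \<inter> W"
  define V' where "V' = h ` \<phi> ` U'"
  have "continuous_on S \<phi>" using hom by (simp add: homeomorphism_def)
  then have oU': "open U'" unfolding U'_def using ST(1) U(1) W(1) by (simp add: continuous_on_open_vimage open_Int)
  have U'S: "U' \<subseteq> S" and \<phi>U': "\<phi> ` U' \<subseteq> U" by (auto simp: U'_def)
  have "openin (top_of_set T) (\<phi> ` U')"
    using homeomorphism_imp_open_map[OF hom] oU' U'S by (simp add: open_subset)
  then have "open (\<phi> ` U')" using ST(2) openin_open_trans by blast
  then have "openin (top_of_set U) (\<phi> ` U')" using \<phi>U' by (rule open_subset[rotated])
  then have oV': "open V'"
    unfolding V'_def using homeomorphism_imp_open_map[OF hk] U(2) openin_open_trans by blast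
  have hom': "homeomorphism U' V' (h \<circ> \<phi>) (\<psi> \<circ> k)"
    by (rule homeomorphism_compose[OF homeomorphism_of_subsets[OF hom U'S]
          homeomorphism_of_subsets[OF hk \<phi>U']]) (auto simp: V'_def homeomorphism_def)
  have img: "(h \<circ> \<phi>) ` {w \<in> U'. g w = 0} = {(x, y). (x, y) \<in> V' \<and> x^2 + y^(n+1) = 0}"
  proof -
    have inj: "inj_on h U" using hk by (metis homeomorphism_apply1 inj_on_inverseI)
    have "\<phi> ` {w \<in> U'. g w = 0} = {z \<in> U. g' z = 0} \<inter> \<phi> ` U'"
      using zeros by (auto simp: U'_def)
    then have "(h \<circ> \<phi>) ` {w \<in> U'. g w = 0} = h ` {z \<in> U. g' z = 0} \<inter> V'"
      unfolding V'_def image_comp[symmetric] using inj_on_image_Int[OF inj _ \<phi>U'] by auto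
    moreover have "V' \<subseteq> V" using hk \<phi>U' by (auto simp: V'_def homeomorphism_def)
    ultimately show ?thesis using model by auto
  qed
  have "w0 \<in> U'" using W U(3) by (auto simp: U'_def)
  then show ?thesis by (rule germ_type_a_atI[OF oU' oV' _ hom' _ img]) (simp add: h0)
qed

lemma homeomorphism_affine_coordinates:
  fixes a b c d u0 v0 :: complex
  assumes det: "a*d - b*c \<noteq> 0"
  shows "homeomorphism UNIV UNIV (\<lambda>(u, v). (a*(u - u0) + b*(v - v0), c*(u - u0) + d*(v - v0)))
           (\<lambda>(x, y). (u0 + (d*x - b*y) / (a*d - b*c), v0 + (a*y - c*x) / (a*d - b*c)))"
proof (rule homeomorphismI)
  show "continuous_on UNIV (\<lambda>(u, v). (a*(u - u0) + b*(v - v0), c*(u - u0) + d*(v - v0)))"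
    by (simp add: case_prod_unfold) (intro continuous_intros)
  show "continuous_on UNIV (\<lambda>(x, y). (u0 + (d*x - b*y) / (a*d - b*c), v0 + (a*y - c*x) / (a*d - b*c)))"
    by (simp add: case_prod_unfold) (intro continuous_intros, use det in auto)
  show "(\<lambda>(x, y). (u0 + (d*x - b*y) / (a*d - b*c), v0 + (a*y - c*x) / (a*d - b*c)))
      ((\<lambda>(u, v). (a*(u - u0) + b*(v - v0), c*(u - u0) + d*(v - v0))) w) = w" for w
  proof (cases w)
    case (Pair u v)
    have "d*(a*(u - u0) + b*(v - v0)) - b*(c*(u - u0) + d*(v - v0)) = (a*d - b*c) * (u - u0)"
      "a*(c*(u - u0) + d*(v - v0)) - c*(a*(u - u0) + b*(v - v0)) = (a*d - b*c) * (v - v0)"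
      by (simp_all add: algebra_simps)
    then show ?thesis using det by (simp add: Pair del: times_divide_eq_left)
  qed
  show "(\<lambda>(u, v). (a*(u - u0) + b*(v - v0), c*(u - u0) + d*(v - v0)))
      ((\<lambda>(x, y). (u0 + (d*x - b*y) / (a*d - b*c), v0 + (a*y - c*x) / (a*d - b*c))) z) = z" for z
  proof (cases z)
    case (Pair x y)
    have "a*(d*x - b*y) + b*(a*y - c*x) = (a*d - b*c) * x" "c*(d*x - b*y) + d*(a*y - c*x) = (a*d - b*c) * y"
      by (simp_all add: algebra_simps)
    then have "a*((d*x - b*y) / (a*d - b*c)) + b*((a*y - c*x) / (a*d - b*c)) = x"
      "c*((d*x - b*y) / (a*d - b*c)) + d*((a*y - c*x) / (a*d - b*c)) = y"
      using det by (simp_all only: times_divide_eq_right add_divide_distrib[symmetric]) simp_all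
    then show ?thesis by (simp add: Pair)
  qed
qed (rule subset_UNIV)+

lemma germ_type_a_at_affine_change:
  fixes a b c d u0 v0 :: complex
  assumes det: "a*d - b*c \<noteq> 0" and germ: "germ_type_a_at g' 0 n" and W: "open W" "(u0, v0) \<in> W"
    and zeros: "\<forall>(u, v)\<in>W. g (u, v) = 0 \<longleftrightarrow> g' (a*(u - u0) + b*(v - v0), c*(u - u0) + d*(v - v0)) = 0"
  shows "germ_type_a_at g (u0, v0) n"
proof (rule germ_type_a_at_pullback[OF homeomorphism_affine_coordinates[OF det] open_UNIV open_UNIV _ W])
  show "germ_type_a_at g' ((\<lambda>(u, v). (a*(u - u0) + b*(v - v0), c*(u - u0) + d*(v - v0))) (u0, v0)) n"
    using germ by (simp add: zero_prod_def)
  show "\<forall>w\<in>W. g w = 0 \<longleftrightarrow> g' ((\<lambda>(u, v). (a*(u - u0) + b*(v - v0), c*(u - u0) + d*(v - v0))) w) = 0"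
    using zeros by auto
qed simp

lemma model_curve_eq_0_iff:
  fixes x y :: complex
  assumes "m \<ge> 1"
  shows "x^2 + y^(2*m - 1 + 1) = 0 \<longleftrightarrow> x = \<i> * y^m \<or> x = - \<i> * y^m"
proof -
  have "y^(2*m - 1 + 1) = (y^m)^2" using assms by (simp add: power_mult[symmetric] mult.commute)
  then have "x^2 + y^(2*m - 1 + 1) = (x - \<i> * y^m) * (x + \<i> * y^m)"
    by (simp add: algebra_simps power2_eq_square)
  then show ?thesis by (simp add: eq_neg_iff_add_eq_0)
qed

lemma continuous_on_ball_avoid:
  fixes f :: "'a::metric_space \<Rightarrow> 'b::t1_space"
  assumes "continuous_on (ball x r) f" "0 < r" "f x \<noteq> a"
  obtains r' where "0 < r'" "r' \<le> r" "\<forall>y\<in>ball x r'. f y \<noteq> a"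
proof -
  obtain \<epsilon> where "\<epsilon> > 0" "\<forall>y\<in>ball x r. dist x y < \<epsilon> \<longrightarrow> f y \<noteq> a"
    using continuous_on_avoid[OF assms(1) _ assms(3)] assms(2) by auto
  then show ?thesis using assms(2) by (intro that[of "min r \<epsilon>"]) auto
qed

lemma homeomorphism_shear:
  fixes \<alpha> \<beta> :: "complex \<Rightarrow> complex"
  assumes "continuous_on V \<alpha>" "continuous_on V \<beta>" "\<forall>v\<in>V. \<beta> v \<noteq> 0"
  shows "homeomorphism (UNIV \<times> V) (UNIV \<times> V) (\<lambda>(u, v). ((u - \<alpha> v) / \<beta> v, v)) (\<lambda>(x, v). (\<beta> v * x + \<alpha> v, v))"
proof (rule homeomorphismI)
  have cont: "continuous_on (UNIV \<times> V) (\<lambda>w. f (snd w))" if "continuous_on V f" for f :: "complex \<Rightarrow> complex"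
    by (rule continuous_on_compose2[OF that continuous_on_snd]) auto
  show "continuous_on (UNIV \<times> V) (\<lambda>(u, v). ((u - \<alpha> v) / \<beta> v, v))"
    unfolding case_prod_unfold using assms by (intro continuous_intros cont) auto
  show "continuous_on (UNIV \<times> V) (\<lambda>(x, v). (\<beta> v * x + \<alpha> v, v))"
    unfolding case_prod_unfold using assms by (intro continuous_intros cont) auto
qed (use assms(3) in auto)

lemma model_curve_shear_eq_0_iff:
  fixes u y p1 p2 \<beta> :: complex
  assumes m: "m \<ge> 1" and \<beta>: "\<beta> \<noteq> 0" and e: "\<i> * y^m * \<beta> = (p1 - p2) / 2"
  shows "((u - (p1 + p2) / 2) / \<beta>)^2 + y^(2*m - 1 + 1) = 0 \<longleftrightarrow> u = p1 \<or> u = p2"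
proof -
  have "(u - (p1 + p2) / 2) / \<beta> = \<i> * y^m \<longleftrightarrow> u - (p1 + p2) / 2 = (p1 - p2) / 2"
    "(u - (p1 + p2) / 2) / \<beta> = - \<i> * y^m \<longleftrightarrow> u - (p1 + p2) / 2 = - ((p1 - p2) / 2)"
    using \<beta> by (simp_all only: divide_eq_eq mult_minus_left e simp_thms if_True)
  moreover have "u - (p1 + p2) / 2 = (p1 - p2) / 2 \<longleftrightarrow> u = p1"
    "u - (p1 + p2) / 2 = - ((p1 - p2) / 2) \<longleftrightarrow> u = p2"
    by (auto simp: field_simps)
  ultimately show ?thesis using model_curve_eq_0_iff[OF m] by simp
qed

lemma germ_type_a_at_two_graphs:
  fixes g :: "complex \<times> complex \<Rightarrow> complex" and \<phi>1 \<phi>2 \<psi> :: "complex \<Rightarrow> complex"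
  assumes r0: "0 < r0" and cont: "continuous_on (ball 0 r0) \<phi>1" "continuous_on (ball 0 r0) \<phi>2"
      "continuous_on (ball 0 r0) \<psi>"
    and \<psi>0: "\<psi> 0 \<noteq> 0" and diff: "\<forall>v\<in>ball 0 r0. \<phi>1 v - \<phi>2 v = v^m * \<psi> v"
    and \<phi>1_0: "\<phi>1 0 = 0" and m: "m \<ge> 1"
    and W: "open W" "0 \<in> W"
    and zeros: "\<forall>(u, v)\<in>W. v \<in> ball 0 r0 \<longrightarrow> (g (u, v) = 0 \<longleftrightarrow> u = \<phi>1 v \<or> u = \<phi>2 v)"
  shows "germ_type_a_at g 0 (2*m - 1)"
proof -
  obtain r where r: "0 < r" "r \<le> r0" and \<psi>_nz: "\<forall>v\<in>ball 0 r. \<psi> v \<noteq> 0"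
    by (rule continuous_on_ball_avoid[OF cont(3) r0 \<psi>0])
  have sub: "ball 0 r \<subseteq> ball (0::complex) r0" using r(2) by auto
  \<comment> \<open>The shear centred at the midpoint of the two graphs, scaled by \<open>-\<i> \<psi> / 2\<close>,
     carries them onto the two branches \<open>x = \<plusminus>\<i> y\<^sup>m\<close> of the model curve.\<close>
  define \<alpha> where "\<alpha> = (\<lambda>v. (\<phi>1 v + \<phi>2 v) / 2)"
  define \<beta> where "\<beta> = (\<lambda>v. - \<i> * \<psi> v / 2)"
  define h where "h = (\<lambda>(u, v). ((u - \<alpha> v) / \<beta> v, v))"
  have hom: "homeomorphism (UNIV \<times> ball 0 r) (UNIV \<times> ball 0 r) h (\<lambda>(x, v). (\<beta> v * x + \<alpha> v, v))"
    unfolding h_def \<alpha>_def \<beta>_def using \<psi>_nz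
    by (intro homeomorphism_shear continuous_intros continuous_on_subset[OF _ sub] cont) auto
  have "\<phi>1 0 - \<phi>2 0 = 0^m * \<psi> 0" using diff r0 by simp
  then have "\<phi>2 0 = 0" using \<phi>1_0 m by (simp add: power_0_left)
  then have h0: "h 0 = 0" by (simp add: h_def \<alpha>_def zero_prod_def \<phi>1_0)
  have zeros': "\<forall>w\<in>W \<inter> (UNIV \<times> ball 0 r). g w = 0 \<longleftrightarrow> (\<lambda>(x, y). x^2 + y^(2*m - 1 + 1)) (h w) = 0"
  proof
    fix w assume "w \<in> W \<inter> (UNIV \<times> ball 0 r)"
    then obtain u v where w: "w = (u, v)" "w \<in> W" and v: "v \<in> ball 0 r" by (cases w) auto
    have "\<phi>1 v - \<phi>2 v = v^m * \<psi> v" using diff v sub by auto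
    then have e: "\<i> * v^m * \<beta> v = (\<phi>1 v - \<phi>2 v) / 2"
      by (simp add: \<beta>_def mult.left_commute[of "v^m"] mult.assoc)
    have \<beta>v: "\<beta> v \<noteq> 0" using \<psi>_nz v by (simp add: \<beta>_def)
    have "g w = 0 \<longleftrightarrow> u = \<phi>1 v \<or> u = \<phi>2 v" using zeros w v r(2) by auto
    then show "g w = 0 \<longleftrightarrow> (\<lambda>(x, y). x^2 + y^(2*m - 1 + 1)) (h w) = 0"
      using model_curve_shear_eq_0_iff[OF m \<beta>v e, of u] by (simp add: h_def \<alpha>_def w(1))
  qed
  have "germ_type_a_at (\<lambda>(x, y). x^2 + y^(2*m - 1 + 1)) (h 0) (2*m - 1)"
    using h0 germ_type_a_at_model by simp
  moreover have "open (W \<inter> (UNIV \<times> ball 0 r))" "0 \<in> W \<inter> (UNIV \<times> ball 0 r)"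
    using W r(1) by (auto simp: open_Times zero_prod_def)
  ultimately show ?thesis
    using germ_type_a_at_pullback[OF hom _ _ _ _ _ _ zeros'] by (simp add: open_Times)
qed

lemma germ_type_a_at_node:
  fixes a b c d u0 v0 :: complex
  assumes det: "a*d - b*c \<noteq> 0" and W: "open W" "(u0, v0) \<in> W"
    and zeros: "\<forall>(u, v)\<in>W. g (u, v) = 0 \<longleftrightarrow> (a*(u - u0) + b*(v - v0)) * (c*(u - u0) + d*(v - v0)) = 0"
  shows "germ_type_a_at g (u0, v0) 1"
proof (rule germ_type_a_at_affine_change[OF _ germ_type_a_at_model W])
  show "(a + c)/2 * ((b - d)/(2*\<i>)) - (b + d)/2 * ((a - c)/(2*\<i>)) \<noteq> 0"
    using det by (simp add: field_simps)
  have "((a + c)/2 * x + (b + d)/2 * y)^2 + ((a - c)/(2*\<i>) * x + (b - d)/(2*\<i>) * y)^(1+1)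
      = (a*x + b*y) * (c*x + d*y)" for x y :: complex
    by (simp add: field_simps power2_eq_square)
  then show "\<forall>(u, v)\<in>W. g (u, v) = 0 \<longleftrightarrow> (\<lambda>(x, y). x^2 + y^(1+1))
      ((a + c)/2 * (u - u0) + (b + d)/2 * (v - v0), (a - c)/(2*\<i>) * (u - u0) + (b - d)/(2*\<i>) * (v - v0)) = 0"
    using zeros by auto
qed

lemma quadratic_root_formula:
  fixes a b c D :: complex
  assumes D: "D \<noteq> 0" and disc: "(D - b)^2 = b^2 - 4*a*c"
  shows "a * (- 2 * c / D)^2 + b * (- 2 * c / D) + c = 0"
proof -
  have "D^2 - 2*b*D + 4*a*c = 0" using disc by (simp add: algebra_simps power2_eq_square)
  moreover have "(a * (- 2 * c / D)^2 + b * (- 2 * c / D) + c) * D^2 = c * (D^2 - 2*b*D + 4*a*c)"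
    using D by (simp add: field_simps power2_eq_square)
  ultimately show ?thesis using D by simp
qed

lemma continuous_quadratic_root:
  fixes A B C :: "complex \<Rightarrow> complex"
  assumes cont: "continuous_on UNIV A" "continuous_on UNIV B" "continuous_on UNIV C"
    and B0: "B 0 \<noteq> 0" and C0: "C 0 = 0"
  obtains r e where "0 < r" "continuous_on (ball 0 r) e" "e 0 = 0"
    "\<forall>t\<in>ball 0 r. A t * (e t)^2 + B t * e t + C t = 0"
proof -
  \<comment> \<open>The root \<open>-2C / (B + \<surd>(B\<^sup>2 - 4AC))\<close>, with the square root normalised by \<open>B 0\<close>
     so that it stays in the half plane where \<open>csqrt\<close> is continuous.\<close>
  define q where "q = (\<lambda>t. ((B t)^2 - 4 * A t * C t) / (B 0)^2)"
  define D where "D = (\<lambda>t. B t + B 0 * csqrt (q t))"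
  define S where "S = D -` (-{0}) \<inter> q -` ball 1 1"
  have right_half: "z \<notin> \<real>\<^sub>\<le>\<^sub>0" if "z \<in> ball 1 1" for z :: complex
  proof -
    have "\<bar>Re (1 - z)\<bar> < 1" using that abs_Re_le_cmod[of "1 - z"] by (simp add: dist_norm)
    then show ?thesis by (auto simp: complex_nonpos_Reals_iff)
  qed
  have cq: "continuous_on UNIV q" unfolding q_def using B0 by (intro continuous_intros cont) auto
  have cD: "continuous_on (q -` ball 1 1) D" unfolding D_def
    by (intro continuous_intros continuous_on_subset[OF cont(2)]
          continuous_on_compose2[OF continuous_on_csqrt continuous_on_subset[OF cq]])
       (use right_half in auto)
  have "open (q -` ball 1 1)" using cq by (simp add: open_vimage)
  then have "open S" unfolding S_def using cD continuous_on_open_vimage by (blast intro: open_Compl)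
  moreover have "0 \<in> S" using B0 C0 by (simp add: S_def q_def D_def)
  ultimately obtain r where r: "0 < r" "ball 0 r \<subseteq> S" using open_contains_ball by blast
  define e where "e = (\<lambda>t. - 2 * C t / D t)"
  show ?thesis
  proof (rule that[OF r(1)])
    show "continuous_on (ball 0 r) e" unfolding e_def
      using r(2) by (intro continuous_intros continuous_on_subset[OF cont(3)] continuous_on_subset[OF cD])
        (auto simp: S_def)
    show "e 0 = 0" by (simp add: e_def C0)
    show "\<forall>t\<in>ball 0 r. A t * (e t)^2 + B t * e t + C t = 0"
    proof
      fix t :: complex assume "t \<in> ball 0 r"
      then have "D t \<noteq> 0" using r(2) by (auto simp: S_def)
      moreover have "(B 0 * csqrt (q t))^2 = (B t)^2 - 4 * A t * C t"
        using B0 by (simp add: q_def power_mult_distrib)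
      then have "(D t - B t)^2 = (B t)^2 - 4 * A t * C t" by (simp add: D_def)
      ultimately show "A t * (e t)^2 + B t * e t + C t = 0"
        unfolding e_def by (rule quadratic_root_formula)
    qed
  qed
qed

lemma quadratic_zeros_near_root:
  fixes A B C :: "complex \<Rightarrow> complex"
  assumes cont: "continuous_on UNIV A" "continuous_on UNIV B" "continuous_on UNIV C"
    and B0: "B 0 \<noteq> 0" and C0: "C 0 = 0"
  obtains r e W where "0 < r" "continuous_on (ball 0 r) e" "e 0 = 0"
    "\<forall>t\<in>ball 0 r. A t * (e t)^2 + B t * e t + C t = 0"
    "open W" "0 \<in> W" "\<forall>(x, t)\<in>W. t \<in> ball 0 r \<and> (A t * x^2 + B t * x + C t = 0 \<longleftrightarrow> x = e t)"
proof -
  obtain r e where r: "0 < r" and ce: "continuous_on (ball 0 r) e" and e0: "e 0 = 0"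
    and root: "\<forall>t\<in>ball 0 r. A t * (e t)^2 + B t * e t + C t = 0"
    using continuous_quadratic_root[OF cont B0 C0] by blast
  define N where "N = (\<lambda>(x, t). A t * (x + e t) + B t)"
  define W where "W = N -` (-{0}) \<inter> (UNIV \<times> ball 0 r)"
  have "continuous_on (UNIV \<times> ball 0 r) N" unfolding N_def case_prod_unfold
    by (intro continuous_intros continuous_on_compose2[OF cont(1)] continuous_on_compose2[OF cont(2)]
          continuous_on_compose2[OF ce]) auto
  then have "open W" unfolding W_def
    by (simp add: continuous_on_open_vimage open_Compl open_Times)
  moreover have "0 \<in> W" using r B0 e0 by (simp add: W_def N_def zero_prod_def)
  moreover have "\<forall>(x, t)\<in>W. t \<in> ball 0 r \<and> (A t * x^2 + B t * x + C t = 0 \<longleftrightarrow> x = e t)"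
  proof (clarify)
    fix x t assume "(x, t) \<in> W"
    then have t: "t \<in> ball 0 r" and "N (x, t) \<noteq> 0" by (auto simp: W_def)
    moreover have "A t * x^2 + B t * x + C t = (x - e t) * N (x, t)"
      using root t by (simp add: N_def algebra_simps power2_eq_square)
    ultimately show "t \<in> ball 0 r \<and> (A t * x^2 + B t * x + C t = 0 \<longleftrightarrow> x = e t)" by simp
  qed
  ultimately show ?thesis using that r ce e0 root by blast
qed

lemma product_quadratic_zeros_near_roots:
  fixes A1 B1 C1 A2 B2 C2 :: "complex \<Rightarrow> complex" and g :: "complex \<times> complex \<Rightarrow> complex"
  assumes cont: "continuous_on UNIV A1" "continuous_on UNIV B1" "continuous_on UNIV C1"
      "continuous_on UNIV A2" "continuous_on UNIV B2" "continuous_on UNIV C2"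
    and B0: "B1 0 \<noteq> 0" "B2 0 \<noteq> 0" and C0: "C1 0 = 0" "C2 0 = 0"
    and g: "\<And>x t. g (x, t) = (A1 t * x^2 + B1 t * x + C1 t) * (A2 t * x^2 + B2 t * x + C2 t)"
  obtains r e1 e2 W where "0 < r" "continuous_on (ball 0 r) e1" "continuous_on (ball 0 r) e2"
    "e1 0 = 0" "e2 0 = 0"
    "\<forall>t\<in>ball 0 r. A1 t * (e1 t)^2 + B1 t * e1 t + C1 t = 0"
    "\<forall>t\<in>ball 0 r. A2 t * (e2 t)^2 + B2 t * e2 t + C2 t = 0"
    "open W" "0 \<in> W" "\<forall>(x, t)\<in>W. g (x, t) = 0 \<longleftrightarrow> x = e1 t \<or> x = e2 t"
proof -
  obtain r1 e1 W1 where r1: "0 < r1" and e1: "continuous_on (ball 0 r1) e1" "e1 0 = 0"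
      "\<forall>t\<in>ball 0 r1. A1 t * (e1 t)^2 + B1 t * e1 t + C1 t = 0"
    and W1: "open W1" "0 \<in> W1" "\<forall>(x, t)\<in>W1. t \<in> ball 0 r1 \<and> (A1 t * x^2 + B1 t * x + C1 t = 0 \<longleftrightarrow> x = e1 t)"
    using quadratic_zeros_near_root[OF cont(1-3) B0(1) C0(1)] by blast
  obtain r2 e2 W2 where r2: "0 < r2" and e2: "continuous_on (ball 0 r2) e2" "e2 0 = 0"
      "\<forall>t\<in>ball 0 r2. A2 t * (e2 t)^2 + B2 t * e2 t + C2 t = 0"
    and W2: "open W2" "0 \<in> W2" "\<forall>(x, t)\<in>W2. t \<in> ball 0 r2 \<and> (A2 t * x^2 + B2 t * x + C2 t = 0 \<longleftrightarrow> x = e2 t)"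
    using quadratic_zeros_near_root[OF cont(4-6) B0(2) C0(2)] by blast
  have sub: "ball 0 (min r1 r2) \<subseteq> ball 0 r1" "ball 0 (min r1 r2) \<subseteq> ball (0::complex) r2" by auto
  show ?thesis
  proof (rule that[of "min r1 r2" e1 e2 "W1 \<inter> W2"])
    show "continuous_on (ball 0 (min r1 r2)) e1" "continuous_on (ball 0 (min r1 r2)) e2"
      using continuous_on_subset[OF e1(1) sub(1)] continuous_on_subset[OF e2(1) sub(2)] .
    show "\<forall>(x, t)\<in>W1 \<inter> W2. g (x, t) = 0 \<longleftrightarrow> x = e1 t \<or> x = e2 t"
      using W1(3) W2(3) by (auto simp: g)
  qed (use r1 r2 e1 e2 W1 W2 sub in auto)
qed

lemma transverse_branches_difference:
  fixes \<alpha> \<beta> \<gamma> \<delta> \<kappa> s t e1 e2 :: complex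
  assumes "\<alpha> * e1^2 + (\<beta> + \<gamma>*t) * e1 + (\<delta>*t + (\<kappa> - s)*t^2) = 0"
    and "\<alpha> * e2^2 + (\<beta> + \<gamma>*t) * e2 + (\<delta>*t + (\<kappa> + s)*t^2) = 0"
  shows "(e1 - e2) * (\<alpha> * (e1 + e2) + \<beta> + \<gamma>*t) = 2 * s * t^2"
proof -
  have "(e1 - e2) * (\<alpha> * (e1 + e2) + \<beta> + \<gamma>*t) - 2 * s * t^2 =
      (\<alpha> * e1^2 + (\<beta> + \<gamma>*t) * e1 + (\<delta>*t + (\<kappa> - s)*t^2))
      - (\<alpha> * e2^2 + (\<beta> + \<gamma>*t) * e2 + (\<delta>*t + (\<kappa> + s)*t^2))"
    by (simp add: algebra_simps power2_eq_square)
  then show ?thesis by (simp only: assms diff_self right_minus_eq)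
qed

lemma tangent_branches_difference:
  fixes \<alpha> \<gamma> \<delta> \<kappa> s t e1 e2 D1 D2 M :: complex
  assumes root1: "(\<kappa> - s) * e1^2 + (\<gamma>*t + \<delta>) * e1 + \<alpha>*t^2 = 0"
    and root2: "(\<kappa> + s) * e2^2 + (\<gamma>*t + \<delta>) * e2 + \<alpha>*t^2 = 0"
    and D1: "D1 = (\<kappa> - s) * e1 + \<gamma>*t + \<delta>" "D1 \<noteq> 0" and D2: "D2 = (\<kappa> + s) * e2 + \<gamma>*t + \<delta>" "D2 \<noteq> 0"
    and M: "M = \<kappa> * (e1 + e2) + \<gamma>*t + \<delta>" "M \<noteq> 0"
  shows "e1 - e2 = t^4 * (s * ((\<alpha> / D1)^2 + (\<alpha> / D2)^2) / M)"
proof -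
  \<comment> \<open>Each branch is divisible by \<open>t\<^sup>2\<close>, and so their difference by \<open>t\<^sup>4\<close>.\<close>
  have "e1 * D1 + \<alpha>*t^2 = (\<kappa> - s) * e1^2 + (\<gamma>*t + \<delta>) * e1 + \<alpha>*t^2"
    "e2 * D2 + \<alpha>*t^2 = (\<kappa> + s) * e2^2 + (\<gamma>*t + \<delta>) * e2 + \<alpha>*t^2"
    by (simp_all add: D1(1) D2(1) algebra_simps power2_eq_square)
  then have "e1 * D1 + \<alpha>*t^2 = 0" "e2 * D2 + \<alpha>*t^2 = 0" by (simp_all only: root1 root2)
  then have e: "e1 = t^2 * (- \<alpha> / D1)" "e2 = t^2 * (- \<alpha> / D2)"
    using D1(2) D2(2) by (simp_all add: field_simps eq_neg_iff_add_eq_0)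
  have "(e1 - e2) * M - s * (e1^2 + e2^2) =
      ((\<kappa> - s) * e1^2 + (\<gamma>*t + \<delta>) * e1 + \<alpha>*t^2) - ((\<kappa> + s) * e2^2 + (\<gamma>*t + \<delta>) * e2 + \<alpha>*t^2)"
    by (simp add: M algebra_simps power2_eq_square)
  then have "(e1 - e2) * M = s * (e1^2 + e2^2)" by (simp only: root1 root2 diff_self right_minus_eq)
  then have "e1 - e2 = s * (e1^2 + e2^2) / M" using M(2) by (simp add: field_simps)
  also have "\<dots> = t^4 * (s * ((\<alpha> / D1)^2 + (\<alpha> / D2)^2) / M)"
    unfolding e by (simp add: algebra_simps power2_eq_square power4_eq_xxxx)
  finally show ?thesis .
qed

lemma germ_type_a_at_transverse:
  fixes \<alpha> \<beta> \<gamma> \<delta> \<kappa> c' :: complex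
  assumes c': "c' \<noteq> 0" and \<beta>: "\<beta> \<noteq> 0"
  shows "germ_type_a_at (\<lambda>(x, t). (\<alpha>*x^2 + \<beta>*x + (\<gamma>*x + \<delta>)*t + \<kappa>*t^2)^2 - c'*t^4) 0 3"
proof -
  define s where "s = csqrt c'"
  have s: "s^2 = c'" "s \<noteq> 0" using c' by (auto simp: s_def)
  obtain r e1 e2 W where r: "0 < r" and ce: "continuous_on (ball 0 r) e1" "continuous_on (ball 0 r) e2"
    and e0: "e1 0 = 0" "e2 0 = 0"
    and root1: "\<forall>t\<in>ball 0 r. \<alpha> * (e1 t)^2 + (\<beta> + \<gamma>*t) * e1 t + (\<delta>*t + (\<kappa> - s)*t^2) = 0"
    and root2: "\<forall>t\<in>ball 0 r. \<alpha> * (e2 t)^2 + (\<beta> + \<gamma>*t) * e2 t + (\<delta>*t + (\<kappa> + s)*t^2) = 0"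
    and W: "open W" "0 \<in> W"
    and zeros: "\<forall>(x, t)\<in>W. (\<alpha>*x^2 + \<beta>*x + (\<gamma>*x + \<delta>)*t + \<kappa>*t^2)^2 - c'*t^4 = 0 \<longleftrightarrow> x = e1 t \<or> x = e2 t"
    by (rule product_quadratic_zeros_near_roots[of "\<lambda>_. \<alpha>" "\<lambda>t. \<beta> + \<gamma>*t" "\<lambda>t. \<delta>*t + (\<kappa> - s)*t^2"
          "\<lambda>_. \<alpha>" "\<lambda>t. \<beta> + \<gamma>*t" "\<lambda>t. \<delta>*t + (\<kappa> + s)*t^2"
          "\<lambda>(x, t). (\<alpha>*x^2 + \<beta>*x + (\<gamma>*x + \<delta>)*t + \<kappa>*t^2)^2 - c'*t^4"])
       (use \<beta> in \<open>auto intro!: continuous_intros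
          simp: s(1)[symmetric] algebra_simps power2_eq_square power4_eq_xxxx\<close>)
  define M where "M = (\<lambda>t. \<alpha> * (e1 t + e2 t) + \<beta> + \<gamma>*t)"
  have cM: "continuous_on (ball 0 r) M" unfolding M_def by (intro continuous_intros ce)
  obtain r' where r': "0 < r'" "r' \<le> r" and M_nz: "\<forall>t\<in>ball 0 r'. M t \<noteq> 0"
    using continuous_on_ball_avoid[OF cM r, of 0] \<beta> e0 by (auto simp: M_def)
  have sub: "ball 0 r' \<subseteq> ball (0::complex) r" using r' by auto
  have "germ_type_a_at (\<lambda>(x, t). (\<alpha>*x^2 + \<beta>*x + (\<gamma>*x + \<delta>)*t + \<kappa>*t^2)^2 - c'*t^4) 0 (2*2 - 1)"
  proof (rule germ_type_a_at_two_graphs[OF r'(1) continuous_on_subset[OF ce(1) sub]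
      continuous_on_subset[OF ce(2) sub] _ _ _ e0(1) _ W, where \<psi> = "\<lambda>t. 2 * s / M t" and m = 2])
    show "continuous_on (ball 0 r') (\<lambda>t. 2 * s / M t)"
      using M_nz by (intro continuous_intros continuous_on_subset[OF cM sub]) auto
    show "2 * s / M 0 \<noteq> 0" using s \<beta> e0 by (simp add: M_def)
    show "\<forall>t\<in>ball 0 r'. e1 t - e2 t = t^2 * (2 * s / M t)"
    proof
      fix t :: complex assume t: "t \<in> ball 0 r'"
      then have "(e1 t - e2 t) * M t = 2 * s * t^2"
        unfolding M_def using root1 root2 sub by (intro transverse_branches_difference) auto
      then show "e1 t - e2 t = t^2 * (2 * s / M t)" using M_nz t by (simp add: field_simps)
    qed
  qed (use zeros in auto)
  then show ?thesis by simp
qed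

lemma germ_type_a_at_tangent:
  fixes \<alpha> \<gamma> \<delta> \<kappa> c' :: complex
  assumes c': "c' \<noteq> 0" and \<alpha>: "\<alpha> \<noteq> 0" and \<delta>: "\<delta> \<noteq> 0"
  shows "germ_type_a_at (\<lambda>(x, t). (\<alpha>*t^2 + (\<gamma>*t + \<delta>)*x + \<kappa>*x^2)^2 - c'*x^4) 0 7"
proof -
  define s where "s = csqrt c'"
  have s: "s^2 = c'" "s \<noteq> 0" using c' by (auto simp: s_def)
  obtain r e1 e2 W where r: "0 < r" and ce: "continuous_on (ball 0 r) e1" "continuous_on (ball 0 r) e2"
    and e0: "e1 0 = 0" "e2 0 = 0"
    and root1: "\<forall>t\<in>ball 0 r. (\<kappa> - s) * (e1 t)^2 + (\<gamma>*t + \<delta>) * e1 t + \<alpha>*t^2 = 0"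
    and root2: "\<forall>t\<in>ball 0 r. (\<kappa> + s) * (e2 t)^2 + (\<gamma>*t + \<delta>) * e2 t + \<alpha>*t^2 = 0"
    and W: "open W" "0 \<in> W"
    and zeros: "\<forall>(x, t)\<in>W. (\<alpha>*t^2 + (\<gamma>*t + \<delta>)*x + \<kappa>*x^2)^2 - c'*x^4 = 0 \<longleftrightarrow> x = e1 t \<or> x = e2 t"
    by (rule product_quadratic_zeros_near_roots[of "\<lambda>_. \<kappa> - s" "\<lambda>t. \<gamma>*t + \<delta>" "\<lambda>t. \<alpha>*t^2"
          "\<lambda>_. \<kappa> + s" "\<lambda>t. \<gamma>*t + \<delta>" "\<lambda>t. \<alpha>*t^2"
          "\<lambda>(x, t). (\<alpha>*t^2 + (\<gamma>*t + \<delta>)*x + \<kappa>*x^2)^2 - c'*x^4"])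
       (use \<delta> in \<open>auto intro!: continuous_intros
          simp: s(1)[symmetric] algebra_simps power2_eq_square power4_eq_xxxx\<close>)
  define D1 where "D1 = (\<lambda>t. (\<kappa> - s) * e1 t + \<gamma>*t + \<delta>)"
  define D2 where "D2 = (\<lambda>t. (\<kappa> + s) * e2 t + \<gamma>*t + \<delta>)"
  define M where "M = (\<lambda>t. \<kappa> * (e1 t + e2 t) + \<gamma>*t + \<delta>)"
  have cK: "continuous_on (ball 0 r) (\<lambda>t. D1 t * D2 t * M t)"
    unfolding D1_def D2_def M_def by (intro continuous_intros ce)
  obtain r' where r': "0 < r'" "r' \<le> r" and nz: "\<forall>t\<in>ball 0 r'. D1 t * D2 t * M t \<noteq> 0"
    using continuous_on_ball_avoid[OF cK r, where a = 0] \<delta> e0 by (auto simp: D1_def D2_def M_def)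
  have sub: "ball 0 r' \<subseteq> ball (0::complex) r" using r' by auto
  define \<psi> where "\<psi> = (\<lambda>t. s * ((\<alpha> / D1 t)^2 + (\<alpha> / D2 t)^2) / M t)"
  have "germ_type_a_at (\<lambda>(x, t). (\<alpha>*t^2 + (\<gamma>*t + \<delta>)*x + \<kappa>*x^2)^2 - c'*x^4) 0 (2*4 - 1)"
  proof (rule germ_type_a_at_two_graphs[OF r'(1) continuous_on_subset[OF ce(1) sub]
      continuous_on_subset[OF ce(2) sub] _ _ _ e0(1) _ W, where \<psi> = \<psi> and m = 4])
    show "continuous_on (ball 0 r') \<psi>"
      unfolding \<psi>_def D1_def D2_def M_def using nz
      by (intro continuous_intros continuous_on_subset[OF ce(1) sub] continuous_on_subset[OF ce(2) sub])
         (auto simp: D1_def D2_def M_def)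
    show "\<psi> 0 \<noteq> 0" using s \<alpha> \<delta> e0 by (simp add: \<psi>_def D1_def D2_def M_def)
    show "\<forall>t\<in>ball 0 r'. e1 t - e2 t = t^4 * \<psi> t"
    proof
      fix t :: complex assume t: "t \<in> ball 0 r'"
      show "e1 t - e2 t = t^4 * \<psi> t" unfolding \<psi>_def
        by (rule tangent_branches_difference) (use root1 root2 nz t sub in \<open>auto simp: D1_def D2_def M_def\<close>)
    qed
  qed (use zeros in auto)
  then show ?thesis by simp
qed

lemma order_0_quadratic_vanishing_at_0:
  fixes c1 c2 :: complex
  assumes "c1 \<noteq> 0 \<or> c2 \<noteq> 0"
  shows "order 0 [:0, c1, c2:] = (if c1 = 0 then 2 else 1)"
proof -
  have "[:0, c1, c2:] = [:0, 1:]^(if c1 = 0 then 2 else 1) * (if c1 = 0 then [:c2:] else [:c1, c2:])"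
    by (simp add: power2_eq_square)
  moreover have "order 0 (if c1 = 0 then [:c2:] else [:c1, c2:]) = 0"
    using assms by (intro order_0I) auto
  moreover have "order 0 ([:0, 1:]^n :: complex poly) = n" for n
    using order_power_n_n[of "0::complex" n] by simp
  ultimately show ?thesis using assms by (simp add: order_mult)
qed

lemma I_Linf_eq:
  fixes a20 a11 a02 p1 p2 z :: complex
  assumes nz: "p1 \<noteq> 0 \<or> p2 \<noteq> 0" and on: "a20*p1^2 + a11*p1*p2 + a02*p2^2 = 0"
    and notLinf: "\<not> (a20 = 0 \<and> a11 = 0 \<and> a02 = 0)"
  shows "I_Linf a20 a11 a02 (p1, p2, z) =
    (if 2*a20*p1 + a11*p2 = 0 \<and> a11*p1 + 2*a02*p2 = 0 then 2 else 1)"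
proof (cases "p1 = 0")
  case True
  then have "a02 = 0" using nz on by simp
  then show ?thesis using True nz notLinf on
    by (cases "a11 = 0") (simp_all add: I_Linf_def order_0_quadratic_vanishing_at_0)
next
  case False
  \<comment> \<open>By Euler's identity the two partial derivatives of \<open>F\<^sub>2\<^sup>(\<^sup>2\<^sup>)\<close> are proportional at \<open>(p1, p2)\<close>.\<close>
  have "p1 * (2*a20*p1 + a11*p2) + p2 * (a11*p1 + 2*a02*p2) = 2 * (a20*p1^2 + a11*p1*p2 + a02*p2^2)"
    by (simp add: algebra_simps power2_eq_square)
  then have "p1 * (2*a20*p1 + a11*p2) = - p2 * (a11*p1 + 2*a02*p2)"
    using on by (simp add: eq_neg_iff_add_eq_0)
  then have "2*a20*p1 + a11*p2 = 0 \<longleftrightarrow> a11*p1 + 2*a02*p2 = 0 \<or> p2 = 0"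
    using False by auto
  moreover have "a02 \<noteq> 0" if "a11*p1 + 2*a02*p2 = 0"
    using that False notLinf on by (auto simp: power2_eq_square)
  moreover have "I_Linf a20 a11 a02 (p1, p2, z) = order 0 [:0, a11*p1 + 2*a02*p2, a02:]"
    using False on by (simp add: I_Linf_def)
  ultimately show ?thesis
    using order_0_quadratic_vanishing_at_0[of "a11*p1 + 2*a02*p2" a02] by auto
qed

lemma germ_type_a_at_conic_at_infinity:
  fixes a b c d e k c' u0 :: complex
  assumes c': "c' \<noteq> 0" and q_nz: "\<not> (a = 0 \<and> b = 0 \<and> c = 0)" and root: "a*u0^2 + b*u0 + c = 0"
    and smooth: "2*a*u0 + b = 0 \<Longrightarrow> d*u0 + e \<noteq> 0"
  shows "germ_type_a_at (\<lambda>(u, v). (a*u^2 + b*u + c + (d*u + e)* v + k* v^2)^2 - c'* v^4) (u0, 0)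
           (if 2*a*u0 + b = 0 then 7 else 3)"
proof (cases "2*a*u0 + b = 0")
  case False
  have "a*u^2 + b*u + c + (d*u + e)* v + k* v^2
      = a*(u - u0)^2 + (2*a*u0 + b)*(u - u0) + (d*(u - u0) + (d*u0 + e))* v + k* v^2" for u v
    using root by (simp add: algebra_simps power2_eq_square)
  then have "germ_type_a_at (\<lambda>(u, v). (a*u^2 + b*u + c + (d*u + e)* v + k* v^2)^2 - c'* v^4) (u0, 0) 3"
    by (intro germ_type_a_at_affine_change[where a = 1 and b = 0 and c = 0 and d = 1,
          OF _ germ_type_a_at_transverse[OF c' False, where \<alpha> = a and \<gamma> = d and \<delta> = "d*u0 + e" and \<kappa> = k]
          open_UNIV UNIV_I]) simp_all
  then show ?thesis using False by simp
next
  case True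
  have "a \<noteq> 0" using True root q_nz by auto
  have b: "b = -2*a*u0" using True by (simp add: eq_neg_iff_add_eq_0 add.commute)
  then have "c - a*u0^2 = a*u0^2 + b*u0 + c" by (simp add: algebra_simps power2_eq_square)
  then have "c = a*u0^2" using root by simp
  with b have "a*u^2 + b*u + c + (d*u + e)* v + k* v^2 = a*(u - u0)^2 + (d*(u - u0) + (d*u0 + e))* v + k* v^2" for u v
    by (simp add: algebra_simps power2_eq_square)
  then have "germ_type_a_at (\<lambda>(u, v). (a*u^2 + b*u + c + (d*u + e)* v + k* v^2)^2 - c'* v^4) (u0, 0) 7"
    by (intro germ_type_a_at_affine_change[where a = 0 and b = 1 and c = 1 and d = 0,
          OF _ germ_type_a_at_tangent[OF c' \<open>a \<noteq> 0\<close> smooth[OF True], where \<gamma> = d and \<kappa> = k]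
          open_UNIV UNIV_I]) (simp_all add: algebra_simps)
  then show ?thesis using True by simp
qed

lemma F2_has_derivative:
  "(F2 a20 a11 a02 a10 a01 a00 has_derivative
     (\<lambda>h. (2*a20*x + a11*y + a10*z) * fst h + (a11*x + 2*a02*y + a01*z) * fst (snd h)
          + (a10*x + a01*y + 2*a00*z) * snd (snd h))) (at (x, y, z))"
proof -
  have "F2 a20 a11 a02 a10 a01 a00 = (\<lambda>w. a20 * (fst w)^2 + a11 * fst w * fst (snd w) + a02 * (fst (snd w))^2
      + (a10 * fst w + a01 * fst (snd w)) * snd (snd w) + a00 * (snd (snd w))^2)"
    by (auto simp: F2_def fun_eq_iff)
  then show ?thesis
    by (simp only:) (rule has_derivative_eq_rhs, (rule derivative_intros)+,
        auto simp: fun_eq_iff algebra_simps power2_eq_square)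
qed

lemma sing_pt_iff_gradient:
  fixes A B C :: complex
  assumes "(f has_derivative (\<lambda>h. A * fst h + B * fst (snd h) + C * snd (snd h))) (at p)"
  shows "sing_pt f p \<longleftrightarrow> on_curve f p \<and> A = 0 \<and> B = 0 \<and> C = 0"
proof -
  have "(f has_derivative (\<lambda>_. 0)) (at p) \<longleftrightarrow>
      (\<lambda>h::complex \<times> complex \<times> complex. A * fst h + B * fst (snd h) + C * snd (snd h)) = (\<lambda>_. 0)"
  proof
    assume "(f has_derivative (\<lambda>_. 0)) (at p)"
    then show "(\<lambda>h::complex \<times> complex \<times> complex. A * fst h + B * fst (snd h) + C * snd (snd h)) = (\<lambda>_. 0)"
      by (rule has_derivative_unique[OF assms])
  qed (use assms in simp)
  also have "\<dots> \<longleftrightarrow> A = 0 \<and> B = 0 \<and> C = 0"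
  proof
    assume e: "(\<lambda>h::complex \<times> complex \<times> complex. A * fst h + B * fst (snd h) + C * snd (snd h)) = (\<lambda>_. 0)"
    show "A = 0 \<and> B = 0 \<and> C = 0"
      using fun_cong[OF e, of "(1, 0, 0)"] fun_cong[OF e, of "(0, 1, 0)"] fun_cong[OF e, of "(0, 0, 1)"] by simp
  qed simp
  finally show ?thesis by (simp add: sing_pt_def)
qed

lemma sing_pt_F2_iff:
  "sing_pt (F2 a20 a11 a02 a10 a01 a00) (x, y, z) \<longleftrightarrow> on_curve (F2 a20 a11 a02 a10 a01 a00) (x, y, z) \<and>
     2*a20*x + a11*y + a10*z = 0 \<and> a11*x + 2*a02*y + a01*z = 0 \<and> a10*x + a01*y + 2*a00*z = 0"
  by (rule sing_pt_iff_gradient[OF F2_has_derivative])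

lemma sing_pt_G_iff:
  fixes a20 a11 a02 a10 a01 a00 c' x y z :: complex
  defines "F \<equiv> F2 a20 a11 a02 a10 a01 a00"
  shows "sing_pt (\<lambda>w. (F w)^2 - c' * (snd (snd w))^4) (x, y, z) \<longleftrightarrow>
     on_curve (\<lambda>w. (F w)^2 - c' * (snd (snd w))^4) (x, y, z) \<and>
     F (x, y, z) * (2*a20*x + a11*y + a10*z) = 0 \<and> F (x, y, z) * (a11*x + 2*a02*y + a01*z) = 0 \<and>
     F (x, y, z) * (a10*x + a01*y + 2*a00*z) = 2 * c' * z^3"
proof -
  have "((\<lambda>w. (F w)^2 - c' * (snd (snd w))^4) has_derivative
      (\<lambda>h. (2 * F (x, y, z) * (2*a20*x + a11*y + a10*z)) * fst h
         + (2 * F (x, y, z) * (a11*x + 2*a02*y + a01*z)) * fst (snd h)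
         + (2 * F (x, y, z) * (a10*x + a01*y + 2*a00*z) - 4 * c' * z^3) * snd (snd h))) (at (x, y, z))"
    unfolding F_def
    by (rule has_derivative_eq_rhs, (rule F2_has_derivative derivative_intros)+)
       (auto simp: fun_eq_iff algebra_simps power2_eq_square eval_nat_numeral)
  then show ?thesis by (auto simp: sing_pt_iff_gradient)
qed

lemma germ_type_a_G_at_smooth_point_at_infinity:
  fixes a20 a11 a02 a10 a01 a00 c' :: complex
  defines "F \<equiv> F2 a20 a11 a02 a10 a01 a00"
  assumes notLinf: "\<not> (a20 = 0 \<and> a11 = 0 \<and> a02 = 0)" and c': "c' \<noteq> 0"
    and Linf: "on_Linf p" and smooth: "smooth_pt F p"
  shows "germ_type_a (\<lambda>w. (F w)^2 - c' * (snd (snd w))^4) p (4 * I_Linf a20 a11 a02 p - 1)"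
proof -
  obtain p1 p2 where p: "p = (p1, p2, 0)" and nz: "p1 \<noteq> 0 \<or> p2 \<noteq> 0"
    using Linf by (cases p) (auto simp: on_Linf_def zero_prod_def)
  have on: "a20*p1^2 + a11*p1*p2 + a02*p2^2 = 0"
    using smooth by (simp add: smooth_pt_def on_curve_def p F_def F2_def)
  have grad: "\<not> (2*a20*p1 + a11*p2 = 0 \<and> a11*p1 + 2*a02*p2 = 0 \<and> a10*p1 + a01*p2 = 0)"
    using smooth sing_pt_F2_iff[of a20 a11 a02 a10 a01 a00 p1 p2 0] by (auto simp: smooth_pt_def p F_def)
  have I: "4 * I_Linf a20 a11 a02 p - 1 = (if 2*a20*p1 + a11*p2 = 0 \<and> a11*p1 + 2*a02*p2 = 0 then 7 else 3)"
    using I_Linf_eq[OF nz on notLinf] by (simp add: p)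
  show ?thesis
  proof (cases "p2 = 0")
    case False
    define u0 where "u0 = p1 / p2"
    have p1: "p1 = u0 * p2" using False by (simp add: u0_def)
    have "(a20*u0^2 + a11*u0 + a02) * p2^2 = a20*p1^2 + a11*p1*p2 + a02*p2^2"
      by (simp add: p1 algebra_simps power2_eq_square)
    then have root: "a20*u0^2 + a11*u0 + a02 = 0" using on False by simp
    moreover have "2*a20*p1 + a11*p2 = (2*a20*u0 + a11) * p2"
      "a11*p1 + 2*a02*p2 = 2 * (a20*u0^2 + a11*u0 + a02) * p2 - u0 * (2*a20*u0 + a11) * p2"
      by (simp_all add: p1 algebra_simps power2_eq_square)
    then have "2*a20*p1 + a11*p2 = 0 \<and> a11*p1 + 2*a02*p2 = 0 \<longleftrightarrow> 2*a20*u0 + a11 = 0"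
      using root False by auto
    moreover have "a10*p1 + a01*p2 = (a10*u0 + a01) * p2" by (simp add: p1 algebra_simps)
    moreover have "(\<lambda>w. (F (chart p w))^2 - c' * (snd (snd (chart p w)))^4)
        = (\<lambda>(u, v). (a20*u^2 + a11*u + a02 + (a10*u + a01)* v + a00* v^2)^2 - c'* v^4)"
      using False by (auto simp: fun_eq_iff p chart_def F_def F2_def)
    moreover have "chart_pt p = (u0, 0)" using False by (simp add: p chart_pt_def u0_def)
    ultimately show ?thesis
      using germ_type_a_at_conic_at_infinity[OF c' notLinf, of u0 a10 a01 a00] grad False I
      by (auto simp: germ_type_a_iff_chart)
  next
    case True
    then have "p1 \<noteq> 0" "a20 = 0" using nz on by auto
    moreover have "(\<lambda>w. (F (chart p w))^2 - c' * (snd (snd (chart p w)))^4)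
        = (\<lambda>(u, v). (a02*u^2 + a11*u + a20 + (a01*u + a10)* v + a00* v^2)^2 - c'* v^4)"
      using True \<open>p1 \<noteq> 0\<close> by (auto simp: fun_eq_iff p chart_def F_def F2_def algebra_simps)
    moreover have "chart_pt p = (0, 0)" using True \<open>p1 \<noteq> 0\<close> by (simp add: p chart_pt_def)
    moreover have "\<not> (a02 = 0 \<and> a11 = 0 \<and> a20 = 0)" using notLinf by auto
    ultimately show ?thesis
      using germ_type_a_at_conic_at_infinity[OF c', of a02 a11 a20 0 a01 a10 a00] grad True I
      by (auto simp: germ_type_a_iff_chart)
  qed
qed

lemma binary_quadratic_form_factors:
  fixes \<alpha> \<beta> \<gamma> :: complex
  obtains a b c d where "\<alpha> = a*c" "\<beta> = a*d + b*c" "\<gamma> = b*d"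
proof (cases "\<alpha> = 0")
  case True
  then show ?thesis by (intro that[where a = 0 and b = 1 and c = \<beta> and d = \<gamma>]) simp_all
next
  case False
  define D where "D = csqrt (\<beta>^2 - 4*\<alpha>*\<gamma>)"
  have "((\<beta> - D)/2) * ((\<beta> + D)/(2*\<alpha>)) = (\<beta>^2 - D^2)/(4*\<alpha>)"
    using False by (simp add: field_simps power2_eq_square)
  also have "\<dots> = \<gamma>" using False by (simp add: D_def)
  finally show ?thesis
    using False
    by (intro that[where a = \<alpha> and b = "(\<beta> - D)/2" and c = 1 and d = "(\<beta> + D)/(2*\<alpha>)"])
       (simp_all add: field_simps)
qed

lemma F2_factors_if_singular_at_infinity:
  fixes b20 b11 b02 b10 b01 b00 p1 p2 :: complex
  assumes nz: "p1 \<noteq> 0 \<or> p2 \<noteq> 0"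
    and grad: "2*b20*p1 + b11*p2 = 0" "b11*p1 + 2*b02*p2 = 0" "b10*p1 + b01*p2 = 0"
  obtains l1 l2 where "\<forall>w. F2 b20 b11 b02 b10 b01 b00 w = lin_form l1 w * lin_form l2 w"
proof -
  \<comment> \<open>The conic is a binary quadratic form in \<open>Z\<close> and a linear form \<open>L\<close> vanishing at \<open>(p1, p2)\<close>.\<close>
  obtain \<mu> \<nu> \<sigma> \<tau> where F2_eq: "\<And>x y z. F2 b20 b11 b02 b10 b01 b00 (x, y, z)
      = \<sigma> * (\<mu>*x + \<nu>*y)^2 + \<tau> * (\<mu>*x + \<nu>*y) * z + b00 * z^2"
  proof (cases "p2 = 0")
    case True
    then have "p1 \<noteq> 0" using nz by simp
    then have "b20 = 0" "b11 = 0" "b10 = 0" using grad True by simp_all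
    then show ?thesis by (intro that[where \<mu> = 0 and \<nu> = 1 and \<sigma> = b02 and \<tau> = b01]) (simp add: F2_def algebra_simps)
  next
    case False
    define r where "r = p1 / p2"
    have p1: "p1 = r * p2" using False by (simp add: r_def)
    have "(2*b20*r + b11) * p2 = 0" "(b11*r + 2*b02) * p2 = 0" "(b10*r + b01) * p2 = 0"
      using grad unfolding p1 by (simp_all add: algebra_simps)
    then have "b11 = -2*b20*r" "b11*r + 2*b02 = 0" "b01 = -b10*r"
      using False by (simp_all add: eq_neg_iff_add_eq_0 add.commute)
    then have "b11 = -2*b20*r" "b02 = b20*r^2" "b01 = -b10*r"
      by (simp_all add: algebra_simps power2_eq_square)
    then show ?thesis
      by (intro that[where \<mu> = 1 and \<nu> = "-r" and \<sigma> = b20 and \<tau> = b10])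
         (simp add: F2_def algebra_simps power2_eq_square)
  qed
  obtain a b c d where abcd: "\<sigma> = a*c" "\<tau> = a*d + b*c" "b00 = b*d"
    by (rule binary_quadratic_form_factors)
  have "F2 b20 b11 b02 b10 b01 b00 w = lin_form (a*\<mu>, a*\<nu>, b) w * lin_form (c*\<mu>, c*\<nu>, d) w" for w
  proof (cases w)
    case (fields x y z)
    then show ?thesis
      by (simp only: F2_eq) (simp add: abcd lin_form_def algebra_simps power2_eq_square)
  qed
  then show ?thesis by (intro that) blast
qed

lemma four_lines_G_if_singular_at_infinity:
  fixes a20 a11 a02 a10 a01 a00 c' :: complex
  defines "F \<equiv> F2 a20 a11 a02 a10 a01 a00"
  assumes notLinf: "\<not> (a20 = 0 \<and> a11 = 0 \<and> a02 = 0)"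
    and Linf: "on_Linf p" and sing: "sing_pt F p"
  shows "four_lines (\<lambda>w. (F w)^2 - c' * (snd (snd w))^4)"
proof -
  obtain p1 p2 where p: "p = (p1, p2, 0)" and nz: "p1 \<noteq> 0 \<or> p2 \<noteq> 0"
    using Linf by (cases p) (auto simp: on_Linf_def zero_prod_def)
  have grad: "2*a20*p1 + a11*p2 = 0" "a11*p1 + 2*a02*p2 = 0" "a10*p1 + a01*p2 = 0"
    using sing sing_pt_F2_iff[of a20 a11 a02 a10 a01 a00 p1 p2 0] by (simp_all add: p F_def)
  define s where "s = csqrt c'"
  have s: "s^2 = c'" by (simp add: s_def)
  \<comment> \<open>\<open>F\<^sup>2 - c' Z\<^sup>4 = (F - s Z\<^sup>2)(F + s Z\<^sup>2)\<close>, and both factors are conics singular at \<open>p\<close>.\<close>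
  obtain l1 l2 where l12: "\<forall>w. F2 a20 a11 a02 a10 a01 (a00 - s) w = lin_form l1 w * lin_form l2 w"
    by (rule F2_factors_if_singular_at_infinity[OF nz grad])
  obtain l3 l4 where l34: "\<forall>w. F2 a20 a11 a02 a10 a01 (a00 + s) w = lin_form l3 w * lin_form l4 w"
    by (rule F2_factors_if_singular_at_infinity[OF nz grad])
  define l where "l = (\<lambda>i. [l1, l2, l3, l4] ! i)"
  have G_eq: "(F w)^2 - c' * (snd (snd w))^4 = (\<Prod>i<4. lin_form (l i) w)" for w
  proof -
    have "(F w)^2 - c' * (snd (snd w))^4 = F2 a20 a11 a02 a10 a01 (a00 - s) w * F2 a20 a11 a02 a10 a01 (a00 + s) w"
      by (cases w) (simp add: F_def F2_def s[symmetric] algebra_simps power2_eq_square power4_eq_xxxx)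
    then show ?thesis using l12 l34 by (simp add: l_def eval_nat_numeral mult_ac)
  qed
  obtain w0 where "(F w0)^2 - c' * (snd (snd w0))^4 \<noteq> 0"
  proof -
    consider "a20 \<noteq> 0" | "a02 \<noteq> 0" | "a20 + a11 + a02 \<noteq> 0" using notLinf by force
    then show ?thesis
      by cases (auto intro: that[of "(1, 0, 0)"] that[of "(0, 1, 0)"] that[of "(1, 1, 0)"] simp: F_def F2_def)
  qed
  then have "\<forall>i<4. l i \<noteq> 0"
    unfolding G_eq by (cases w0) (force simp: lin_form_def zero_prod_def)
  then show ?thesis unfolding four_lines_def using G_eq by blast
qed

lemma sing_pt_G_off_conic_iff:
  fixes a20 a11 a02 a10 a01 a00 c' x y z :: complex
  defines "F \<equiv> F2 a20 a11 a02 a10 a01 a00"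
  assumes off: "F (x, y, z) \<noteq> 0"
  shows "sing_pt (\<lambda>w. (F w)^2 - c' * (snd (snd w))^4) (x, y, z) \<longleftrightarrow>
     z \<noteq> 0 \<and> (F (x, y, z))^2 = c' * z^4 \<and> 2*a20*x + a11*y + a10*z = 0 \<and> a11*x + 2*a02*y + a01*z = 0"
proof -
  have euler: "x * (2*a20*x + a11*y + a10*z) + y * (a11*x + 2*a02*y + a01*z) + z * (a10*x + a01*y + 2*a00*z)
      = 2 * F (x, y, z)"
    by (simp add: F_def F2_def algebra_simps power2_eq_square)
  show ?thesis
  proof
    assume "sing_pt (\<lambda>w. (F w)^2 - c' * (snd (snd w))^4) (x, y, z)"
    then show "z \<noteq> 0 \<and> (F (x, y, z))^2 = c' * z^4 \<and> 2*a20*x + a11*y + a10*z = 0 \<and> a11*x + 2*a02*y + a01*z = 0"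
      using off by (auto simp: sing_pt_G_iff on_curve_def F_def)
  next
    assume "z \<noteq> 0 \<and> (F (x, y, z))^2 = c' * z^4 \<and> 2*a20*x + a11*y + a10*z = 0 \<and> a11*x + 2*a02*y + a01*z = 0"
    then have z: "z \<noteq> 0" and F2: "(F (x, y, z))^2 = c' * z^4"
      and Zc: "z * (a10*x + a01*y + 2*a00*z) = 2 * F (x, y, z)" using euler by auto
    have "F (x, y, z) * (a10*x + a01*y + 2*a00*z) * z = 2 * (F (x, y, z))^2"
      using Zc by (simp add: power2_eq_square mult_ac)
    also have "\<dots> = 2 * c' * z^3 * z" using F2 by (simp add: eval_nat_numeral)
    finally have "F (x, y, z) * (a10*x + a01*y + 2*a00*z) * z = 2 * c' * z^3 * z" .
    then show "sing_pt (\<lambda>w. (F w)^2 - c' * (snd (snd w))^4) (x, y, z)"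
      using z F2 \<open>z \<noteq> 0 \<and> _\<close> by (auto simp: sing_pt_G_iff on_curve_def F_def zero_prod_def)
  qed
qed

lemma F2_affine_taylor:
  "F2 a20 a11 a02 a10 a01 a00 (u, v, 1) = F2 a20 a11 a02 a10 a01 a00 (u0, v0, 1)
     + (2*a20*u0 + a11* v0 + a10) * (u - u0) + (a11*u0 + 2*a02* v0 + a01) * (v - v0)
     + (a20*(u - u0)^2 + a11*(u - u0)*(v - v0) + a02*(v - v0)^2)"
  by (simp add: F2_def algebra_simps power2_eq_square)

lemma infinite_sing_if_singular_along_line:
  fixes a b u0 v0 :: complex
  assumes ab: "a \<noteq> 0 \<or> b \<noteq> 0" and sing: "\<And>t. sing_pt f (u0 + t*b, v0 - t*a, 1)"
  shows "\<not> finite_sing f"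
proof
  assume "finite_sing f"
  moreover have "range (\<lambda>t. proj_class (u0 + t*b, v0 - t*a, 1)) \<subseteq> proj_class ` {q. sing_pt f q}"
    using sing by auto
  ultimately have "finite (range (\<lambda>t. proj_class (u0 + t*b, v0 - t*a, 1)))"
    unfolding finite_sing_def by (rule finite_subset[rotated])
  moreover have "inj (\<lambda>t. proj_class (u0 + t*b, v0 - t*a, 1))"
  proof (rule injI)
    fix t1 t2 :: complex
    assume e: "proj_class (u0 + t1*b, v0 - t1*a, 1) = proj_class (u0 + t2*b, v0 - t2*a, 1)"
    have "(u0 + t1*b, v0 - t1*a, 1) \<in> proj_class (u0 + t1*b, v0 - t1*a, 1)"
      unfolding proj_class_def by (rule CollectI, rule exI[of _ 1]) (simp add: scal_def)
    then obtain k where k: "(u0 + t1*b, v0 - t1*a, 1) = scal k (u0 + t2*b, v0 - t2*a, 1)"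
      using e by (auto simp: proj_class_def)
    then have "k = 1" by (simp add: scal_def)
    with k have "t1 * b = t2 * b" "t1 * a = t2 * a" by (simp_all add: scal_def)
    then show "t1 = t2" using ab by auto
  qed
  ultimately have "finite (UNIV :: complex set)" by (rule finite_imageD)
  then show False using infinite_UNIV_char_0 by blast
qed

lemma outer_singular_point_dehomogenized:
  fixes a20 a11 a02 a10 a01 a00 c' x y z :: complex
  defines "F \<equiv> F2 a20 a11 a02 a10 a01 a00"
  assumes sing: "sing_pt (\<lambda>w. (F w)^2 - c' * (snd (snd w))^4) (x, y, z)" and off: "F (x, y, z) \<noteq> 0"
  shows "z \<noteq> 0" "(F (x/z, y/z, 1))^2 = c'" "F (x/z, y/z, 1) \<noteq> 0"
    "2*a20*(x/z) + a11*(y/z) + a10 = 0" "a11*(x/z) + 2*a02*(y/z) + a01 = 0"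
proof -
  have z: "z \<noteq> 0" and F2: "(F (x, y, z))^2 = c' * z^4"
    and grad: "2*a20*x + a11*y + a10*z = 0" "a11*x + 2*a02*y + a01*z = 0"
    using sing sing_pt_G_off_conic_iff[of a20 a11 a02 a10 a01 a00 x y z c'] off by (simp_all add: F_def)
  have scale: "F (x, y, z) = z^2 * F (x/z, y/z, 1)"
    using z by (simp add: F_def F2_def field_simps power2_eq_square)
  show "z \<noteq> 0" by (fact z)
  show "(F (x/z, y/z, 1))^2 = c'" using F2 z by (simp add: scale power_mult_distrib eval_nat_numeral)
  show "F (x/z, y/z, 1) \<noteq> 0" using off by (simp add: scale)
  show "2*a20*(x/z) + a11*(y/z) + a10 = 0" "a11*(x/z) + 2*a02*(y/z) + a01 = 0"
    using grad z by (simp_all add: field_simps)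
qed

lemma germ_type_a_G_at_outer_singularity:
  fixes a20 a11 a02 a10 a01 a00 c' :: complex
  defines "F \<equiv> F2 a20 a11 a02 a10 a01 a00"
  defines "G \<equiv> (\<lambda>w. (F w)^2 - c' * (snd (snd w))^4)"
  assumes notLinf: "\<not> (a20 = 0 \<and> a11 = 0 \<and> a02 = 0)"
    and fin: "finite_sing G" and sing: "sing_pt G p" and off: "\<not> on_curve F p"
  shows "germ_type_a G p 1"
proof -
  obtain x y z where p: "p = (x, y, z)" by (cases p)
  define u0 where "u0 = x / z"
  define v0 where "v0 = y / z"
  define \<sigma> where "\<sigma> = F (u0, v0, 1)"
  have "sing_pt (\<lambda>w. (F w)^2 - c' * (snd (snd w))^4) (x, y, z)" using sing by (simp add: G_def p)
  moreover have "F (x, y, z) \<noteq> 0" using sing off by (auto simp: sing_pt_def on_curve_def p)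
  ultimately have z: "z \<noteq> 0" and \<sigma>: "\<sigma>^2 = c'" "\<sigma> \<noteq> 0"
    and fX: "2*a20*u0 + a11* v0 + a10 = 0" and fY: "a11*u0 + 2*a02* v0 + a01 = 0"
    unfolding u0_def v0_def \<sigma>_def by (rule outer_singular_point_dehomogenized[of a20 a11 a02 a10 a01 a00, folded F_def])+
  obtain a b c d where abcd: "a20 = a*c" "a11 = a*d + b*c" "a02 = b*d"
    by (rule binary_quadratic_form_factors)
  have "F (u, v, 1) - \<sigma> = a20*(u - u0)^2 + a11*(u - u0)*(v - v0) + a02*(v - v0)^2" for u v
    using F2_affine_taylor[of a20 a11 a02 a10 a01 a00 u v u0 v0] fX fY by (simp add: F_def \<sigma>_def)
  moreover have "a20*X^2 + a11*X*Y + a02*Y^2 = (a*X + b*Y) * (c*X + d*Y)" for X Y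
    by (simp add: abcd algebra_simps power2_eq_square)
  ultimately have F_sub: "F (u, v, 1) - \<sigma> = (a*(u - u0) + b*(v - v0)) * (c*(u - u0) + d*(v - v0))" for u v
    by simp
  show ?thesis
  proof (cases "a*d - b*c = 0")
    case False
    define W where "W = {w. F (fst w, snd w, 1) + \<sigma> \<noteq> 0}"
    have "open W" unfolding W_def
      by (rule open_Collect_neq) (auto simp: F_def F2_def intro!: continuous_intros)
    moreover have "(u0, v0) \<in> W" using \<sigma> by (simp add: W_def \<sigma>_def)
    moreover have "G (u, v, 1) = (F (u, v, 1) - \<sigma>) * (F (u, v, 1) + \<sigma>)" for u v
      by (simp add: G_def \<sigma>(1)[symmetric] algebra_simps power2_eq_square)
    ultimately have "germ_type_a_at (\<lambda>w. G (chart p w)) (u0, v0) 1"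
      using z by (intro germ_type_a_at_node[OF False]) (auto simp: W_def p chart_def F_sub)
    then show ?thesis using z by (simp add: germ_type_a_iff_chart chart_pt_def p u0_def v0_def)
  next
    case True
    \<comment> \<open>A degenerate quadratic part makes \<open>G\<close> singular along the line \<open>a (u - u0) + b (v - v0) = 0\<close>.\<close>
    have "sing_pt G (u0 + t*b, v0 - t*a, 1)" for t
    proof -
      have "2*a20*(u0 + t*b) + a11*(v0 - t*a) + a10 = (2*a20*u0 + a11* v0 + a10) + t*a*(b*c - a*d)"
        "a11*(u0 + t*b) + 2*a02*(v0 - t*a) + a01 = (a11*u0 + 2*a02* v0 + a01) + t*b*(b*c - a*d)"
        unfolding abcd by (simp_all add: algebra_simps)
      moreover have "F (u0 + t*b, v0 - t*a, 1) = \<sigma>"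
        using F_sub[of "u0 + t*b" "v0 - t*a"] by (simp add: algebra_simps)
      ultimately show ?thesis
        using sing_pt_G_off_conic_iff[of a20 a11 a02 a10 a01 a00 "u0 + t*b" "v0 - t*a" 1 c'] \<sigma> fX fY True
        by (simp add: G_def F_def)
    qed
    moreover have "a \<noteq> 0 \<or> b \<noteq> 0" using notLinf abcd by auto
    ultimately show ?thesis using infinite_sing_if_singular_along_line fin by blast
  qed
qed

theorem lemma6:
  fixes a20 a11 a02 a10 a01 a00 c' :: complex
  defines "F \<equiv> F2 a20 a11 a02 a10 a01 a00"
  defines "G \<equiv> (\<lambda>w. (F w)^2 - c' * (snd (snd w))^4)"
  assumes notLinf: "\<not> (a20 = 0 \<and> a11 = 0 \<and> a02 = 0)"
    and c'_nz: "c' \<noteq> 0"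
  shows "(\<forall>p. on_Linf p \<and> smooth_pt F p \<longrightarrow>
              germ_type_a G p (4 * I_Linf a20 a11 a02 p - 1))
       \<and> (\<forall>p. on_Linf p \<and> sing_pt F p \<longrightarrow> four_lines G)
       \<and> (finite_sing G \<longrightarrow> (\<forall>p. sing_pt G p \<and> \<not> on_curve F p \<longrightarrow> germ_type_a G p 1))"
  using germ_type_a_G_at_smooth_point_at_infinity[OF notLinf c'_nz]
    four_lines_G_if_singular_at_infinity[OF notLinf]
    germ_type_a_G_at_outer_singularity[OF notLinf]
  unfolding F_def G_def by blast

end
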